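(* If $X$ is a Tychonoff $P$-space, then $T''(X)$ is a (Von Neumann) regular ring.
   Context: $C(X)$ is the ring of real-valued continuous functions on $X$; a cozero set is a set $\{x: h(x)\neq 0\}$ with $h\in C(X)$. $T''(X)$ is the ring (under pointwise operations) of all functions $f\colon X\to\mathbb{R}$ for which there is a dense cozero set $U$ of $X$ with $f|_U$ continuous. A commutative ring $R$ is regular if for each $a\in R$ there is $x\in R$ with $a=a^2x$. A $P$-space is a Tychonoff space in which every zero set is open. *)

theory Defs
  imports "HOL-Analysis.Analysis" "HOL-Algebra.Ring"
begin

definition Tychonoff_space :: "'a topology \<Rightarrow> bool" where
  "Tychonoff_space X \<longleftrightarrow> completely_regular_space X \<and> Hausdorff_space X"

definition cozero_set :: "'a topology \<Rightarrow> 'a set \<Rightarrow> bool" where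
  "cozero_set X U \<longleftrightarrow> (\<exists>h. continuous_map X euclideanreal h \<and> U = {x \<in> topspace X. h x \<noteq> 0})"

definition zero_set :: "'a topology \<Rightarrow> 'a set \<Rightarrow> bool" where
  "zero_set X Z \<longleftrightarrow> (\<exists>h. continuous_map X euclideanreal h \<and> Z = {x \<in> topspace X. h x = 0})"

definition P_space :: "'a topology \<Rightarrow> bool" where
  "P_space X \<longleftrightarrow> Tychonoff_space X \<and> (\<forall>Z. zero_set X Z \<longrightarrow> openin X Z)"

text \<open>T''(X): functions X -> R continuous on some dense cozero set.
  Functions are represented extensionally (value 0 outside topspace X).\<close>
definition T2 :: "'a topology \<Rightarrow> ('a \<Rightarrow> real) set" where
  "T2 X = {f. (\<forall>x. x \<notin> topspace X \<longrightarrow> f x = 0) \<and>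
     (\<exists>U. cozero_set X U \<and> X closure_of U = topspace X \<and>
          continuous_map (subtopology X U) euclideanreal f)}"

definition T2_ring :: "'a topology \<Rightarrow> ('a \<Rightarrow> real) ring" where
  "T2_ring X = \<lparr> carrier = T2 X,
                 mult = (\<lambda>f g x. f x * g x),
                 one = (\<lambda>x. if x \<in> topspace X then 1 else 0),
                 zero = (\<lambda>x. 0),
                 add = (\<lambda>f g x. f x + g x) \<rparr>"

definition regular_ring :: "('b, 'c) ring_scheme \<Rightarrow> bool" where
  "regular_ring R \<longleftrightarrow> cring R \<and>
     (\<forall>a \<in> carrier R. \<exists>x \<in> carrier R. a = a \<otimes>\<^bsub>R\<^esub> a \<otimes>\<^bsub>R\<^esub> x)"

end

theory Submission
  imports Defs
begin

(* T''(X) is a commutative ring for every space X, since two dense cozero sets meet in a dense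
   cozero set. In a P-space the complement of a cozero set is an open zero set, so every cozero
   set is clopen; a dense cozero set is then the whole space and T''(X) = C(X). For f in C(X),
   the function x |-> inverse (f x), which vanishes where f does because inverse 0 = 0, is
   continuous on each of the clopen pieces coz f and Z(f), and f = f^2 (inverse o f). *)

lemma openin_cozero_set:
  assumes "cozero_set X U"
  shows "openin X U"
proof -
  obtain h where h: "continuous_map X euclideanreal h" "U = {x \<in> topspace X. h x \<noteq> 0}"
    using assms unfolding cozero_set_def by blast
  have "openin euclideanreal (- {0})"
    by (simp add: open_Compl flip: open_openin)
  from openin_continuous_map_preimage[OF h(1) this] show ?thesis
    by (simp add: h(2))
qed

lemma cozero_set_topspace: "cozero_set X (topspace X)"
  unfolding cozero_set_def by (rule exI[of _ "\<lambda>_. 1"]) auto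

lemma cozero_set_Int:
  assumes "cozero_set X U" "cozero_set X V"
  shows "cozero_set X (U \<inter> V)"
proof -
  obtain h k where "continuous_map X euclideanreal h" "U = {x \<in> topspace X. h x \<noteq> 0}"
      "continuous_map X euclideanreal k" "V = {x \<in> topspace X. k x \<noteq> 0}"
    using assms unfolding cozero_set_def by blast
  then show ?thesis
    unfolding cozero_set_def
    by (intro exI[of _ "\<lambda>x. h x * k x"]) (auto intro: continuous_map_real_mult)
qed

lemma closure_of_openin_Int_dense:
  assumes "openin X U" "X closure_of U = topspace X" "X closure_of V = topspace X"
  shows "X closure_of (U \<inter> V) = topspace X"
  using closure_of_openin_Int_superset[of X U V] assms openin_subset by metis

lemma closedin_cozero_set_P_space:
  assumes "P_space X" "cozero_set X U"
  shows "closedin X U"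
proof -
  obtain h where h: "continuous_map X euclideanreal h" "U = {x \<in> topspace X. h x \<noteq> 0}"
    using assms(2) unfolding cozero_set_def by blast
  have "openin X {x \<in> topspace X. h x = 0}"
    using assms(1) h(1) unfolding P_space_def zero_set_def by blast
  moreover have "U = topspace X - {x \<in> topspace X. h x = 0}"
    using h(2) by auto
  ultimately show ?thesis
    by auto
qed

lemma continuous_map_inverse_clopen_cozero:
  assumes f: "continuous_map X euclideanreal f"
    and closed: "closedin X {x \<in> topspace X. f x \<noteq> 0}"
  shows "continuous_map X euclideanreal (\<lambda>x. inverse (f x))"
proof -
  let ?S = "{x \<in> topspace X. f x \<noteq> 0}"
  have "openin X ?S"
    using openin_cozero_set f unfolding cozero_set_def by blast
  then have no_frontier: "X frontier_of ?S = {}"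
    using closed frontier_of_eq_empty[of ?S X] by auto
  have "continuous_map X euclideanreal (\<lambda>x. if f x \<noteq> 0 then inverse (f x) else 0)"
  proof (rule continuous_map_cases_alt)
    show "continuous_map (subtopology X (X closure_of ?S)) euclideanreal (\<lambda>x. inverse (f x))"
      unfolding closure_of_closedin[OF closed]
      by (intro continuous_map_real_inverse continuous_map_from_subtopology f) auto
  qed (use no_frontier in auto)
  then show ?thesis
    by (rule continuous_map_eq) auto
qed

lemma T2I:
  "(\<And>x. x \<notin> topspace X \<Longrightarrow> f x = 0) \<Longrightarrow> cozero_set X U \<Longrightarrow> X closure_of U = topspace X
    \<Longrightarrow> continuous_map (subtopology X U) euclideanreal f \<Longrightarrow> f \<in> T2 X"
  unfolding T2_def by blast

lemma T2_zero_outside: "f \<in> T2 X \<Longrightarrow> x \<notin> topspace X \<Longrightarrow> f x = 0"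
  unfolding T2_def by blast

lemma T2_if_continuous_map:
  assumes "\<And>x. x \<notin> topspace X \<Longrightarrow> f x = 0" "continuous_map X euclideanreal f"
  shows "f \<in> T2 X"
  by (rule T2I[OF _ cozero_set_topspace]) (simp_all add: assms)

lemma T2_eq_continuous_map_P_space:
  assumes "P_space X"
  shows "T2 X = {f. (\<forall>x. x \<notin> topspace X \<longrightarrow> f x = 0) \<and> continuous_map X euclideanreal f}"
proof (intro equalityI subsetI)
  fix f assume "f \<in> T2 X"
  then obtain U where U: "\<forall>x. x \<notin> topspace X \<longrightarrow> f x = 0" "cozero_set X U"
      "X closure_of U = topspace X" "continuous_map (subtopology X U) euclideanreal f"
    unfolding T2_def by blast
  have "U = topspace X"
    using closedin_cozero_set_P_space[OF assms U(2)] U(3) closure_of_closedin by metis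
  with U show "f \<in> {f. (\<forall>x. x \<notin> topspace X \<longrightarrow> f x = 0) \<and> continuous_map X euclideanreal f}"
    by simp
qed (auto intro: T2_if_continuous_map)

lemma T2_common_dense_cozero_set:
  assumes "f \<in> T2 X" "g \<in> T2 X"
  obtains U where "cozero_set X U" "X closure_of U = topspace X"
    "continuous_map (subtopology X U) euclideanreal f"
    "continuous_map (subtopology X U) euclideanreal g"
proof -
  obtain U V where U: "cozero_set X U" "X closure_of U = topspace X"
      "continuous_map (subtopology X U) euclideanreal f"
    and V: "cozero_set X V" "X closure_of V = topspace X"
      "continuous_map (subtopology X V) euclideanreal g"
    using assms unfolding T2_def by blast
  show thesis
  proof
    show "cozero_set X (U \<inter> V)"
      using U(1) V(1) by (rule cozero_set_Int)
    show "X closure_of (U \<inter> V) = topspace X"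
      using openin_cozero_set[OF U(1)] U(2) V(2) by (rule closure_of_openin_Int_dense)
  qed (use U(3) V(3) continuous_map_from_subtopology_mono in blast)+
qed

lemma T2_add:
  assumes "f \<in> T2 X" "g \<in> T2 X"
  shows "(\<lambda>x. f x + g x) \<in> T2 X"
proof -
  obtain U where U: "cozero_set X U" "X closure_of U = topspace X"
      "continuous_map (subtopology X U) euclideanreal f"
      "continuous_map (subtopology X U) euclideanreal g"
    using T2_common_dense_cozero_set[OF assms] .
  show ?thesis
    by (rule T2I[OF _ U(1,2)])
       (simp_all add: T2_zero_outside[OF assms(1)] T2_zero_outside[OF assms(2)]
         continuous_map_add U(3,4))
qed

lemma T2_mult:
  assumes "f \<in> T2 X" "g \<in> T2 X"
  shows "(\<lambda>x. f x * g x) \<in> T2 X"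
proof -
  obtain U where U: "cozero_set X U" "X closure_of U = topspace X"
      "continuous_map (subtopology X U) euclideanreal f"
      "continuous_map (subtopology X U) euclideanreal g"
    using T2_common_dense_cozero_set[OF assms] .
  show ?thesis
    by (rule T2I[OF _ U(1,2)])
       (simp_all add: T2_zero_outside[OF assms(1)] continuous_map_real_mult U(3,4))
qed

lemma T2_uminus:
  assumes "f \<in> T2 X"
  shows "(\<lambda>x. - f x) \<in> T2 X"
proof -
  obtain U where U: "cozero_set X U" "X closure_of U = topspace X"
      "continuous_map (subtopology X U) euclideanreal f"
    using assms unfolding T2_def by blast
  show ?thesis
    by (rule T2I[OF _ U(1,2)]) (simp_all add: T2_zero_outside[OF assms] continuous_map_minus U(3))
qed

lemma cring_T2_ring: "cring (T2_ring X)"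
proof (rule cringI)
  show "abelian_group (T2_ring X)"
  proof (rule abelian_groupI)
    fix f assume "f \<in> carrier (T2_ring X)"
    then show "\<exists>g \<in> carrier (T2_ring X). g \<oplus>\<^bsub>T2_ring X\<^esub> f = \<zero>\<^bsub>T2_ring X\<^esub>"
      by (intro bexI[of _ "\<lambda>x. - f x"]) (simp_all add: T2_ring_def T2_uminus)
  qed (simp_all add: T2_ring_def T2_add T2_if_continuous_map add_ac)
  have one: "(\<lambda>x. if x \<in> topspace X then 1 else 0) \<in> T2 X"
    by (rule T2_if_continuous_map) (auto intro: continuous_map_eq[of X euclideanreal "\<lambda>_. 1"])
  show "comm_monoid (T2_ring X)"
  proof (rule comm_monoidI)
    fix f assume "f \<in> carrier (T2_ring X)"
    then show "\<one>\<^bsub>T2_ring X\<^esub> \<otimes>\<^bsub>T2_ring X\<^esub> f = f"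
      by (auto simp: T2_ring_def fun_eq_iff dest: T2_zero_outside)
  qed (simp_all add: T2_ring_def T2_mult one mult_ac)
qed (simp add: T2_ring_def distrib_right)

theorem theorem3p0:
  fixes X :: "'a topology"
  assumes "Tychonoff_space X" and "P_space X"
  shows "regular_ring (T2_ring X)"
  unfolding regular_ring_def
proof (intro conjI ballI)
  show "cring (T2_ring X)"
    by (rule cring_T2_ring)
  fix f assume "f \<in> carrier (T2_ring X)"
  then have f_outside: "\<And>x. x \<notin> topspace X \<Longrightarrow> f x = 0"
    and f_cont: "continuous_map X euclideanreal f"
    using T2_eq_continuous_map_P_space[OF assms(2)] by (auto simp: T2_ring_def)
  have "cozero_set X {x \<in> topspace X. f x \<noteq> 0}"
    unfolding cozero_set_def using f_cont by blast
  then have "closedin X {x \<in> topspace X. f x \<noteq> 0}"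
    by (rule closedin_cozero_set_P_space[OF assms(2)])
  then have "continuous_map X euclideanreal (\<lambda>x. inverse (f x))"
    by (rule continuous_map_inverse_clopen_cozero[OF f_cont])
  then have "(\<lambda>x. inverse (f x)) \<in> carrier (T2_ring X)"
    using f_outside by (simp add: T2_ring_def T2_if_continuous_map)
  moreover have "f = f \<otimes>\<^bsub>T2_ring X\<^esub> f \<otimes>\<^bsub>T2_ring X\<^esub> (\<lambda>x. inverse (f x))"
    by (simp add: T2_ring_def fun_eq_iff field_simps)
  ultimately show "\<exists>g \<in> carrier (T2_ring X). f = f \<otimes>\<^bsub>T2_ring X\<^esub> f \<otimes>\<^bsub>T2_ring X\<^esub> g"
    by blast
qed

end
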